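(* Let $f$ be a function as described in the context and $\rho>0$. For $z,\beta\in[0,1]$ let $h(z,\beta)\coloneqq\beta f\left(\frac{z}{\beta}\right)+(1-\beta)f\left(\frac{1-z}{1-\beta}\right)$, and for $d\in\mathbb{N}_+$ and $\beta_1,\dots,\beta_d\in[0,1]$ define $$g_{f,\rho}(\beta_1,\dots,\beta_d)\coloneqq\inf\left\{z\in[0,1]:\inf_{\lambda_1,\dots,\lambda_d\ge0,\ \sum_i\lambda_i=1}h\left(z,\sum_{i=1}^d\lambda_i\beta_i\right)\le\rho\right\}$$ (for $d=1$ this is $g_{f,\rho}(\beta)=\inf\{z\in[0,1]:h(z,\beta)\le\rho\}$). Then for any $d\in\mathbb{N}_+$ and $\beta_1,\dots,\beta_d\in[0,1]$, $$g_{f,\rho}(\beta_1,\dots,\beta_d)=g_{f,\rho}\left(\min_{1\le i\le d}\beta_i\right).$$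
   Context: $f:\mathbb{R}\to\mathbb{R}\cup\{+\infty\}$ is a closed convex function with $f(1)=0$ and $f(t)=+\infty$ for $t<0$. *)

theory Defs
  imports "HOL-Analysis.Analysis" "HOL-Library.Extended_Real"
begin

text \<open>f : R -> R \<union> {+\<infinity>} is modelled as a function real \<Rightarrow> ereal never taking -\<infinity>.
 Closed convex = epigraph is closed and convex.\<close>

definition epi :: "(real \<Rightarrow> ereal) \<Rightarrow> (real \<times> real) set" where
  "epi f = {(x, y). f x \<le> ereal y}"

definition admissible_f :: "(real \<Rightarrow> ereal) \<Rightarrow> bool" where
  "admissible_f f \<longleftrightarrow> (\<forall>x. f x \<noteq> -\<infinity>) \<and> convex (epi f) \<and> closed (epi f)
     \<and> f 1 = 0 \<and> (\<forall>t<0. f t = \<infinity>)"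

definition f_slope_inf :: "(real \<Rightarrow> ereal) \<Rightarrow> ereal" where
  "f_slope_inf f = Lim at_top (\<lambda>t. f t / ereal t)"

text \<open>Perspective b * f(a/b) with the usual f-divergence conventions
  0 f(0/0) = 0 and 0 f(a/0) = a f'(\<infinity>) for a > 0.\<close>
definition persp :: "(real \<Rightarrow> ereal) \<Rightarrow> real \<Rightarrow> real \<Rightarrow> ereal" where
  "persp f a b = (if b > 0 then ereal b * f (a / b)
                  else if a = 0 then 0 else ereal a * f_slope_inf f)"

definition hfun :: "(real \<Rightarrow> ereal) \<Rightarrow> real \<Rightarrow> real \<Rightarrow> ereal" where
  "hfun f z \<beta> = persp f z \<beta> + persp f (1 - z) (1 - \<beta>)"

text \<open>g_{f,\<rho>}(\<beta>_0,...,\<beta>_{d-1}); infimum taken in the extended reals.\<close>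
definition gfun :: "(real \<Rightarrow> ereal) \<Rightarrow> real \<Rightarrow> nat \<Rightarrow> (nat \<Rightarrow> real) \<Rightarrow> ereal" where
  "gfun f \<rho> d \<beta> = Inf (ereal ` {z \<in> {0..1}.
      (INF w \<in> {w. (\<forall>i<d. w i \<ge> 0) \<and> (\<Sum>i<d. w i) = 1}.
          hfun f z (\<Sum>i<d. w i * \<beta> i)) \<le> ereal \<rho>})"

end

(* Let m be the least \<beta>\<^sub>i. Every convex combination of the \<beta>\<^sub>i lies in [m, 1], and for
   0 \<le> z \<le> m the map h(z, \<cdot>) is nondecreasing on [z, 1]: writing m = (1 - \<nu>) z + \<nu> b, joint
   convexity of the perspective (a, b) \<mapsto> b f(a/b) and h(z, z) = 0 give
   h(z, m) \<le> \<nu> h(z, b) \<le> h(z, b). So the inner infimum equals h(z, m) for z \<le> m; the two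
   sublevel sets then agree on [0, m] and both contain m, hence have the same infimum.
   The perspective at b = 0 is a f'(\<infinity>), which is controlled by f t \<le> (t - 1) f'(\<infinity>) for
   t \<ge> 1, because f t / (t - 1) increases to f'(\<infinity>). *)

theory Submission
  imports Defs "HOL-Real_Asymp.Real_Asymp"
begin

lemma admissible_f_convex:
  assumes adm: "admissible_f f" and "0 \<le> a" "0 \<le> b" "a + b = c" "0 < c"
    and comb: "a * x + b * y = c * w"
  shows "ereal c * f w \<le> ereal a * f x + ereal b * f y"
proof -
  have not_MInf: "f t \<noteq> -\<infinity>" for t
    using adm unfolding admissible_f_def by auto
  consider "a = 0" | "b = 0" | "0 < a" "0 < b"
    using assms by linarith
  then show ?thesis
  proof cases
    case 1
    then have "w = y" "c = b" using assms by auto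
    then show ?thesis using 1 by (simp add: zero_ereal_def[symmetric])
  next
    case 2
    then have "w = x" "c = a" using assms by auto
    then show ?thesis using 2 by (simp add: zero_ereal_def[symmetric])
  next
    case 3
    show ?thesis
    proof (cases "f x = \<infinity> \<or> f y = \<infinity>")
      case True
      have "ereal a * f x \<noteq> -\<infinity>" "ereal b * f y \<noteq> -\<infinity>"
        using 3 not_MInf[of x] not_MInf[of y] by (cases "f x"; cases "f y"; simp)+
      then have "ereal a * f x + ereal b * f y = \<infinity>"
        using True 3 by auto
      then show ?thesis by (simp only: ereal_less_eq(1))
    next
      case False
      then obtain p q where p: "f x = ereal p" and q: "f y = ereal q"
        using not_MInf by (metis ereal_cases)
      have "(x, p) \<in> epi f" "(y, q) \<in> epi f"
        using p q unfolding epi_def by auto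
      moreover have "convex (epi f)"
        using adm unfolding admissible_f_def by auto
      ultimately have "(a/c) *\<^sub>R (x, p) + (b/c) *\<^sub>R (y, q) \<in> epi f"
        using 3 assms by (intro convexD) (auto simp: add_divide_distrib[symmetric])
      moreover have "a/c * x + b/c * y = w"
        using comb \<open>0 < c\<close> by (simp add: field_simps)
      ultimately have "f w \<le> ereal (a/c * p + b/c * q)"
        unfolding epi_def by auto
      then have "ereal c * f w \<le> ereal c * ereal (a/c * p + b/c * q)"
        using \<open>0 < c\<close> by (intro ereal_mult_left_mono) auto
      also have "\<dots> = ereal a * f x + ereal b * f y"
        using \<open>0 < c\<close> p q by (simp add: field_simps)
      finally show ?thesis .
    qed
  qed
qed

lemma admissible_f_slope_mono:
  assumes adm: "admissible_f f" and "1 < s" "s \<le> t"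
  shows "f s * ereal (1/(s-1)) \<le> f t * ereal (1/(t-1))"
proof -
  have "f 1 = 0"
    using adm unfolding admissible_f_def by auto
  have "0 < t - 1"
    using assms by auto
  have "(t-s)/(t-1) + (s-1)/(t-1) = 1"
    using \<open>0 < t - 1\<close> by (simp add: add_divide_distrib[symmetric])
  moreover have "(t-s)/(t-1) * 1 + (s-1)/(t-1) * t = 1 * s"
    using \<open>0 < t - 1\<close> by (simp add: divide_simps) (simp add: algebra_simps)
  ultimately
  have "ereal 1 * f s \<le> ereal ((t-s)/(t-1)) * f 1 + ereal ((s-1)/(t-1)) * f t"
    using assms by (intro admissible_f_convex[OF adm]) auto
  then have "f s \<le> ereal ((s-1)/(t-1)) * f t"
    using \<open>f 1 = 0\<close> by simp
  then have "f s * ereal (1/(s-1)) \<le> ereal (1/(s-1)) * (ereal ((s-1)/(t-1)) * f t)"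
    using assms by (subst mult.commute) (intro ereal_mult_left_mono, auto)
  also have "\<dots> = ereal (1/(s-1) * ((s-1)/(t-1))) * f t"
    by (simp only: mult.assoc times_ereal.simps(1)[symmetric])
  also have "1/(s-1) * ((s-1)/(t-1)) = 1/(t-1)"
    using assms by simp
  finally show ?thesis
    by (simp add: mult.commute)
qed

lemma f_slope_inf_eq_SUP:
  assumes adm: "admissible_f f"
  shows "f_slope_inf f = (SUP t\<in>{1<..}. f t * ereal (1/(t-1)))"
proof -
  define \<phi> where "\<phi> t = f t * ereal (1/(t-1))" for t
  define S where "S = (SUP t\<in>{1<..}. \<phi> t)"
  have "(\<phi> \<longlongrightarrow> S) at_top"
  proof (rule order_tendstoI)
    fix y assume "y < S"
    then obtain t0 where "1 < t0" "y < \<phi> t0"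
      unfolding S_def by (auto simp: less_SUP_iff)
    have "y < \<phi> t" if "t0 \<le> t" for t
      using \<open>y < \<phi> t0\<close> admissible_f_slope_mono[OF adm \<open>1 < t0\<close> that]
      unfolding \<phi>_def by order
    then show "eventually (\<lambda>t. y < \<phi> t) at_top"
      unfolding eventually_at_top_linorder by blast
  next
    fix y assume "S < y"
    have "\<phi> t < y" if "1 < t" for t
      using \<open>S < y\<close> SUP_upper[of t "{1<..}" \<phi>] that unfolding S_def by simp
    then show "eventually (\<lambda>t. \<phi> t < y) at_top"
      unfolding eventually_at_top_linorder by (intro exI[of _ 2]) auto
  qed
  moreover have "((\<lambda>t. ereal ((t-1)/t)) \<longlongrightarrow> ereal 1) at_top"
    by (intro tendsto_ereal) real_asymp
  ultimately have "((\<lambda>t. \<phi> t * ereal ((t-1)/t)) \<longlongrightarrow> S) at_top"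
    using tendsto_mult_ereal by fastforce
  moreover have "eventually (\<lambda>t. \<phi> t * ereal ((t-1)/t) = f t / ereal t) at_top"
    using eventually_gt_at_top[of 1]
  proof eventually_elim
    case (elim t)
    have "\<phi> t * ereal ((t-1)/t) = f t * ereal (1/(t-1) * ((t-1)/t))"
      unfolding \<phi>_def by (simp add: mult.assoc)
    also have "1/(t-1) * ((t-1)/t) = 1/t"
      using elim by simp
    finally show ?case
      using elim by (simp add: divide_ereal_def inverse_eq_divide)
  qed
  ultimately have "((\<lambda>t. f t / ereal t) \<longlongrightarrow> S) at_top"
    using tendsto_cong by fastforce
  then show ?thesis
    unfolding f_slope_inf_def S_def \<phi>_def by (intro tendsto_Lim) auto
qed

lemma admissible_f_le_slope_inf:
  assumes adm: "admissible_f f" and "1 \<le> t"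
  shows "f t \<le> ereal (t-1) * f_slope_inf f"
proof (cases "t = 1")
  case True
  then show ?thesis
    using adm unfolding admissible_f_def by (simp add: zero_ereal_def[symmetric])
next
  case False
  then have "1 < t" using assms by auto
  have "ereal (t-1) * (f t * ereal (1/(t-1))) = ereal ((t-1) * (1/(t-1))) * f t"
    by (simp add: mult_ac)
  then have "f t = ereal (t-1) * (f t * ereal (1/(t-1)))"
    using \<open>1 < t\<close> by simp
  also have "\<dots> \<le> ereal (t-1) * f_slope_inf f"
    unfolding f_slope_inf_eq_SUP[OF adm]
    using \<open>1 < t\<close> by (intro ereal_mult_left_mono SUP_upper) auto
  finally show ?thesis .
qed

lemma hfun_diag:
  assumes "admissible_f f" and "0 \<le> m" "m \<le> 1"
  shows "hfun f m m = 0"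
  using assms unfolding admissible_f_def hfun_def persp_def by auto

lemma hfun_nonneg:
  assumes adm: "admissible_f f" and "0 < b" "b \<le> 1" "z \<le> 1"
  shows "0 \<le> hfun f z b"
proof -
  have "f 1 = 0"
    using adm unfolding admissible_f_def by auto
  consider "b < 1" | "b = 1" "z = 1" | "b = 1" "z < 1"
    using assms by linarith
  then show ?thesis
  proof cases
    case 1
    have "b * (z/b) + (1-b) * ((1-z)/(1-b)) = 1 * 1"
      using 1 \<open>0 < b\<close> by simp
    then have "ereal 1 * f 1 \<le> ereal b * f (z/b) + ereal (1-b) * f ((1-z)/(1-b))"
      using 1 \<open>0 < b\<close> by (intro admissible_f_convex[OF adm]) auto
    then show ?thesis
      using 1 \<open>0 < b\<close> \<open>f 1 = 0\<close> by (simp add: hfun_def persp_def)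
  next
    case 2
    then show ?thesis
      using \<open>f 1 = 0\<close> by (simp add: hfun_def persp_def)
  next
    case 3
    have "ereal (2-z) * f 1 \<le> ereal 1 * f z + ereal (1-z) * f 2"
      using 3 by (intro admissible_f_convex[OF adm]) (auto simp: algebra_simps)
    then have "0 \<le> f z + ereal (1-z) * f 2"
      using \<open>f 1 = 0\<close> by simp
    also have "\<dots> \<le> f z + ereal (1-z) * f_slope_inf f"
      using 3 admissible_f_le_slope_inf[OF adm, of 2]
      by (intro add_left_mono ereal_mult_left_mono) auto
    finally show ?thesis
      using 3 by (simp add: hfun_def persp_def)
  qed
qed

lemma persp_le_on_segment:
  assumes adm: "admissible_f f" and "0 \<le> a" "0 \<le> b" "0 \<le> \<nu>" "\<nu> \<le> 1"
    and c: "c = (1-\<nu>) * a + \<nu> * b" and "0 < c"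
  shows "persp f a c \<le> ereal \<nu> * persp f a b"
proof (cases "b = 0")
  case False
  then have "0 < b"
    using assms by simp
  have "f 1 = 0"
    using adm unfolding admissible_f_def by auto
  have "\<nu> * b * (a/b) = \<nu> * a" "c * (a/c) = a"
    using \<open>0 < b\<close> \<open>0 < c\<close> by simp_all
  then have "(1-\<nu>) * a * 1 + \<nu> * b * (a/b) = c * (a/c)"
    by (simp add: algebra_simps)
  then have "ereal c * f (a/c) \<le> ereal ((1-\<nu>) * a) * f 1 + ereal (\<nu> * b) * f (a/b)"
    using assms by (intro admissible_f_convex[OF adm]) auto
  then show ?thesis
    using \<open>0 < b\<close> \<open>0 < c\<close> \<open>f 1 = 0\<close> by (simp add: persp_def mult.assoc[symmetric])
next
  case True
  then have "c = (1-\<nu>) * a" "0 < a"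
    using assms by (auto simp: zero_less_mult_iff)
  moreover have "0 \<le> \<nu> * a"
    using \<open>0 \<le> \<nu>\<close> \<open>0 < a\<close> by simp
  ultimately have "c \<le> a"
    by (simp add: algebra_simps)
  then have "1 \<le> a/c"
    using \<open>0 < c\<close> by simp
  have "persp f a c = ereal c * f (a/c)"
    using \<open>0 < c\<close> by (simp add: persp_def)
  also have "\<dots> \<le> ereal c * (ereal (a/c - 1) * f_slope_inf f)"
    using \<open>0 < c\<close> \<open>1 \<le> a/c\<close>
    by (intro ereal_mult_left_mono admissible_f_le_slope_inf[OF adm]) auto
  also have "\<dots> = ereal (c * (a/c - 1)) * f_slope_inf f"
    by (simp only: mult.assoc times_ereal.simps(1)[symmetric])
  also have "c * (a/c - 1) = \<nu> * a"
    using \<open>c = (1-\<nu>) * a\<close> \<open>0 < c\<close> by (simp add: algebra_simps)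
  also have "ereal (\<nu> * a) * f_slope_inf f = ereal \<nu> * persp f a b"
    using True \<open>0 < a\<close> by (simp add: persp_def mult.assoc[symmetric])
  finally show ?thesis .
qed

lemma hfun_mono:
  assumes adm: "admissible_f f" and "0 \<le> z" "z \<le> m" "m \<le> b" "b \<le> 1"
  shows "hfun f z m \<le> hfun f z b"
proof -
  consider "m = b" | "z = m" "m < b" | "z < m" "m < b"
    using assms by linarith
  then show ?thesis
  proof cases
    case 1
    then show ?thesis by simp
  next
    case 2
    then show ?thesis
      using hfun_diag[OF adm] hfun_nonneg[OF adm] assms by auto
  next
    case 3
    define \<nu> where "\<nu> = (m-z)/(b-z)"
    have "0 \<le> \<nu>" "\<nu> \<le> 1"
      using assms 3 unfolding \<nu>_def by auto
    have "\<nu> * (b-z) = m - z"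
      using 3 unfolding \<nu>_def by simp
    then have m: "m = (1-\<nu>) * z + \<nu> * b"
      by (simp add: algebra_simps)
    then have "1 - m = (1-\<nu>) * (1-z) + \<nu> * (1-b)"
      by (simp add: algebra_simps)
    then have "hfun f z m \<le> ereal \<nu> * persp f z b + ereal \<nu> * persp f (1-z) (1-b)"
      unfolding hfun_def using assms 3 \<open>0 \<le> \<nu>\<close> \<open>\<nu> \<le> 1\<close> m
      by (intro add_mono persp_le_on_segment[OF adm]) auto
    also have "\<dots> = ereal \<nu> * hfun f z b"
      unfolding hfun_def by (simp add: ereal_pos_distrib \<open>0 \<le> \<nu>\<close>)
    also have "\<dots> \<le> hfun f z b"
      using hfun_nonneg[OF adm, of b z] assms 3 \<open>0 \<le> \<nu>\<close> \<open>\<nu> \<le> 1\<close>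
      by (cases "hfun f z b") (auto simp: mult_left_le_one_le)
    finally show ?thesis .
  qed
qed

lemma INF_hfun_weighted_mean:
  fixes \<beta> :: "nat \<Rightarrow> real"
  assumes adm: "admissible_f f" and "\<forall>i<d. \<beta> i \<in> {m..1}" "i0 < d" "\<beta> i0 = m"
    and "0 \<le> z" "z \<le> m"
  shows "(INF w \<in> {w. (\<forall>i<d. 0 \<le> w i) \<and> (\<Sum>i<d. w i) = (1::real)}.
           hfun f z (\<Sum>i<d. w i * \<beta> i)) = hfun f z m"
proof (rule antisym)
  show "(INF w \<in> {w. (\<forall>i<d. 0 \<le> w i) \<and> (\<Sum>i<d. w i) = (1::real)}.
           hfun f z (\<Sum>i<d. w i * \<beta> i)) \<le> hfun f z m"
    using assms by (intro INF_lower2[of "\<lambda>i. of_bool (i = i0)"]) auto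
  show "hfun f z m \<le> (INF w \<in> {w. (\<forall>i<d. 0 \<le> w i) \<and> (\<Sum>i<d. w i) = (1::real)}.
           hfun f z (\<Sum>i<d. w i * \<beta> i))"
  proof (rule INF_greatest)
    fix w assume "w \<in> {w. (\<forall>i<d. 0 \<le> w i) \<and> (\<Sum>i<d. w i) = (1::real)}"
    then have "(\<Sum>i<d. w i *\<^sub>R \<beta> i) \<in> {m..1}"
      using assms(2) by (intro convex_sum) auto
    then show "hfun f z m \<le> hfun f z (\<Sum>i<d. w i * \<beta> i)"
      using assms by (intro hfun_mono[OF adm]) auto
  qed
qed

lemma Inf_eq_if_agree_below:
  fixes A B :: "'a::complete_linorder set"
  assumes "m \<in> A" "m \<in> B" "\<And>x. x \<le> m \<Longrightarrow> x \<in> A \<longleftrightarrow> x \<in> B"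
  shows "Inf A = Inf B"
proof -
  have Inf_le: "Inf A' \<le> Inf B'" if "m \<in> A'" "\<And>x. x \<in> B' \<Longrightarrow> x \<le> m \<Longrightarrow> x \<in> A'"
    for A' B' :: "'a set"
  proof (rule Inf_greatest)
    fix x assume "x \<in> B'"
    then show "Inf A' \<le> x"
      using Inf_lower[OF \<open>m \<in> A'\<close>] Inf_lower[of x A'] that(2) by (cases "x \<le> m") auto
  qed
  show ?thesis
    by (intro antisym Inf_le) (use assms in auto)
qed

lemma gfun_single:
  "gfun f \<rho> 1 (\<lambda>_. m) = Inf (ereal ` {z \<in> {0..1}. hfun f z m \<le> ereal \<rho>})"
proof -
  have "(INF w \<in> {w. (\<forall>i<1::nat. 0 \<le> w i) \<and> (\<Sum>i<1. w i) = (1::real)}.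
          hfun f z (\<Sum>i<1. w i * m)) = hfun f z m" for z
    by (intro antisym INF_lower2[of "\<lambda>_. 1"] INF_greatest) (auto simp: One_nat_def)
  then show ?thesis
    unfolding gfun_def by simp
qed

theorem lemma17:
  fixes f :: "real \<Rightarrow> ereal" and \<rho> :: real and d :: nat and \<beta> :: "nat \<Rightarrow> real"
  assumes "admissible_f f" and "\<rho> > 0" and "d \<ge> 1"
    and "\<forall>i<d. \<beta> i \<in> {0..1}"
  shows "gfun f \<rho> d \<beta> = gfun f \<rho> 1 (\<lambda>_. Min (\<beta> ` {..<d}))"
proof -
  define m where "m = Min (\<beta> ` {..<d})"
  have "m \<in> \<beta> ` {..<d}"
    unfolding m_def using \<open>d \<ge> 1\<close> by (intro Min_in) (auto simp: lessThan_empty_iff)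
  then obtain i0 where "i0 < d" "\<beta> i0 = m"
    by auto
  have "\<forall>i<d. \<beta> i \<in> {m..1}"
    using assms(4) by (auto simp: m_def)
  then have inner_INF: "(INF w \<in> {w. (\<forall>i<d. 0 \<le> w i) \<and> (\<Sum>i<d. w i) = (1::real)}.
      hfun f z (\<Sum>i<d. w i * \<beta> i)) = hfun f z m" if "0 \<le> z" "z \<le> m" for z
    using INF_hfun_weighted_mean[OF assms(1)] \<open>i0 < d\<close> \<open>\<beta> i0 = m\<close> that by blast
  have "0 \<le> m" "m \<le> 1" "hfun f m m \<le> ereal \<rho>"
    using assms \<open>i0 < d\<close> \<open>\<beta> i0 = m\<close> hfun_diag[OF assms(1), of m] by auto
  then show ?thesis
    unfolding gfun_def[of f \<rho> d] gfun_single m_def[symmetric]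
    by (intro Inf_eq_if_agree_below[of "ereal m"]) (auto simp: inner_INF)
qed

end
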